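(* Let $x\cdot y$ be a PA-structure on $(\mathfrak{g},\mathfrak{n})$, where $\mathfrak{g}$ is abelian and $\mathfrak{n}$ is $2$-step nilpotent. Then $x\circ y=\frac12(x\cdot y+y\cdot x)$ defines a CPA-structure on $\mathfrak{n}$ if and only if $\{\mathfrak{n},\mathfrak{n}\}\cdot\mathfrak{n}=0$, i.e. $\{u,v\}\cdot w=0$ for all $u,v,w\in V$.
   Context: Let $K$ be a field of characteristic zero and $V$ a finite-dimensional vector space over $K$. Let $\mathfrak{g}=(V,[\,,])$ and $\mathfrak{n}=(V,\{\,,\})$ be two Lie algebra structures on $V$. A post-Lie algebra structure (PA-structure) on the pair $(\mathfrak{g},\mathfrak{n})$ is a $K$-bilinear product $x\cdot y$ on $V$ satisfying, for all $x,y,z\in V$: (i) $x\cdot y-y\cdot x=[x,y]-\{x,y\}$; (ii) $[x,y]\cdot z=x\cdot(y\cdot z)-y\cdot(x\cdot z)$; (iii) $x\cdot\{y,z\}=\{x\cdot y,z\}+\{y,x\cdot z\}$. A commutative post-Lie algebra structure (CPA-structure) on the Lie algebra $\mathfrak{n}=(V,\{\,,\})$ is a bilinear product $x\circ y$ on $V$ with $x\circ y=y\circ x$, $\{x,y\}\circ z=x\circ(y\circ z)-y\circ(x\circ z)$, and $x\circ\{y,z\}=\{x\circ y,z\}+\{y,x\circ z\}$ for all $x,y,z$. A Lie algebra is called $2$-step nilpotent here if it is nilpotent of class at most $2$. *)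

theory Defs
  imports Complex_Main
begin

text \<open>A vector space V (the type 'v) over a field K (the type 'k) is given by a
scalar multiplication scale satisfying the axioms of the locale vector_space.\<close>

definition fin_dim_vs :: "('k::field \<Rightarrow> 'v::ab_group_add \<Rightarrow> 'v) \<Rightarrow> bool" where
  "fin_dim_vs scale \<longleftrightarrow> (\<exists>B. finite_dimensional_vector_space scale B)"

definition bilinear_map :: "('k::field \<Rightarrow> 'v::ab_group_add \<Rightarrow> 'v) \<Rightarrow> ('v \<Rightarrow> 'v \<Rightarrow> 'v) \<Rightarrow> bool" where
  "bilinear_map scale f \<longleftrightarrow>
     (\<forall>x. Vector_Spaces.linear scale scale (f x)) \<and>
     (\<forall>y. Vector_Spaces.linear scale scale (\<lambda>x. f x y))"

definition lie_algebra :: "('k::field \<Rightarrow> 'v::ab_group_add \<Rightarrow> 'v) \<Rightarrow> ('v \<Rightarrow> 'v \<Rightarrow> 'v) \<Rightarrow> bool" where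
  "lie_algebra scale br \<longleftrightarrow> bilinear_map scale br \<and> (\<forall>x. br x x = 0) \<and>
     (\<forall>x y z. br x (br y z) + br y (br z x) + br z (br x y) = 0)"

definition abelian_lie :: "('v::ab_group_add \<Rightarrow> 'v \<Rightarrow> 'v) \<Rightarrow> bool" where
  "abelian_lie br \<longleftrightarrow> (\<forall>x y. br x y = 0)"

definition two_step_nilpotent :: "('v::ab_group_add \<Rightarrow> 'v \<Rightarrow> 'v) \<Rightarrow> bool" where
  "two_step_nilpotent br \<longleftrightarrow> (\<forall>x y z. br (br x y) z = 0)"

text \<open>Post-Lie algebra structure on the pair (g, n) = ((V, lb), (V, nb)).\<close>
definition PA_structure :: "('k::field \<Rightarrow> 'v::ab_group_add \<Rightarrow> 'v) \<Rightarrow> ('v \<Rightarrow> 'v \<Rightarrow> 'v)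
    \<Rightarrow> ('v \<Rightarrow> 'v \<Rightarrow> 'v) \<Rightarrow> ('v \<Rightarrow> 'v \<Rightarrow> 'v) \<Rightarrow> bool" where
  "PA_structure scale lb nb p \<longleftrightarrow> bilinear_map scale p \<and>
     (\<forall>x y. p x y - p y x = lb x y - nb x y) \<and>
     (\<forall>x y z. p (lb x y) z = p x (p y z) - p y (p x z)) \<and>
     (\<forall>x y z. p x (nb y z) = nb (p x y) z + nb y (p x z))"

definition CPA_structure :: "('k::field \<Rightarrow> 'v::ab_group_add \<Rightarrow> 'v)
    \<Rightarrow> ('v \<Rightarrow> 'v \<Rightarrow> 'v) \<Rightarrow> ('v \<Rightarrow> 'v \<Rightarrow> 'v) \<Rightarrow> bool" where
  "CPA_structure scale nb c \<longleftrightarrow> bilinear_map scale c \<and>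
     (\<forall>x y. c x y = c y x) \<and>
     (\<forall>x y z. c (nb x y) z = c x (c y z) - c y (c x z)) \<and>
     (\<forall>x y z. c x (nb y z) = nb (c x y) z + nb y (c x z))"

end

theory Submission
  imports Defs
begin

text \<open>Since g is abelian, axiom (ii) says that the left multiplications x\<cdot>_ commute, and
axiom (i) gives x \<circ> y = x\<cdot>y + {x,y}/2. Each x\<cdot>_ is a derivation of n by (iii), and each
{x,_} vanishes on {n,n} because n is 2-step nilpotent, so \<circ> satisfies the derivation axiom.
A short computation shows that the operators x \<circ> _ commute as well, so the remaining CPA
axiom reduces to {x,y} \<circ> z = 0; and {x,y} \<circ> z = {x,y}\<cdot>z because {{x,y},z} = 0.\<close>

lemma
  assumes "bilinear_map s f"
  shows bilinear_map_add_left: "f (x + y) z = f x z + f y z"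
    and bilinear_map_add_right: "f x (y + z) = f x y + f x z"
    and bilinear_map_diff_left: "f (x - y) z = f x z - f y z"
    and bilinear_map_minus_left: "f (- x) z = - f x z"
    and bilinear_map_zero_left: "f 0 z = 0"
    and bilinear_map_scale_left: "f (s a x) z = s a (f x z)"
    and bilinear_map_scale_right: "f x (s a z) = s a (f x z)"
proof -
  have left: "module_hom s s (\<lambda>x. f x z)" and right: "module_hom s s (f x)"
    using assms by (simp_all add: bilinear_map_def module_hom_iff_linear)
  show "f (x + y) z = f x z + f y z" by (rule module_hom.add[OF left])
  show "f x (y + z) = f x y + f x z" by (rule module_hom.add[OF right])
  show "f (x - y) z = f x z - f y z" by (rule module_hom.diff[OF left])
  show "f (- x) z = - f x z" by (rule module_hom.neg[OF left])
  show "f 0 z = 0" by (rule module_hom.zero[OF left])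
  show "f (s a x) z = s a (f x z)" by (rule module_hom.scale[OF left])
  show "f x (s a z) = s a (f x z)" by (rule module_hom.scale[OF right])
qed

lemma bilinear_map_vector_space: "bilinear_map s f \<Longrightarrow> vector_space s"
  by (simp add: bilinear_map_def Vector_Spaces.linear_def)

lemma bilinear_map_symmetrize:
  assumes "bilinear_map s f"
  shows "bilinear_map s (\<lambda>x y. s a (f x y + f y x))"
proof -
  interpret vector_space_pair s s
    using bilinear_map_vector_space[OF assms] by (simp add: vector_space_pair_def)
  have "Vector_Spaces.linear s s (\<lambda>z. s a (g z + h z))"
    if "Vector_Spaces.linear s s g" "Vector_Spaces.linear s s h" for g h
    by (intro linear_compose_scale_right linear_compose_add that)
  with assms show ?thesis
    by (simp add: bilinear_map_def)
qed

lemma lie_algebra_anticommute: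
  assumes "lie_algebra s br"
  shows "br y x = - br x y"
proof -
  have bil: "bilinear_map s br" and alt: "\<And>x. br x x = 0"
    using assms by (auto simp: lie_algebra_def)
  have "br x y + br y x = br (x + y) (x + y)"
    by (simp add: bilinear_map_add_left[OF bil] bilinear_map_add_right[OF bil] alt[of x] alt[of y])
  also have "\<dots> = 0" by (rule alt)
  finally have "br x y + br y x = 0" .
  then show ?thesis by (simp add: add_eq_0_iff)
qed

lemma two_step_nilpotent_right:
  assumes "lie_algebra s br" and "two_step_nilpotent br"
  shows "br x (br y z) = 0"
  using assms lie_algebra_anticommute[OF assms(1), of "br y z" x]
  by (simp add: two_step_nilpotent_def)

locale abelian_PA_two_step =
  fixes scale :: "'k::field_char_0 \<Rightarrow> 'v::ab_group_add \<Rightarrow> 'v"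
    and lb nb p :: "'v \<Rightarrow> 'v \<Rightarrow> 'v"
  assumes lie_nb: "lie_algebra scale nb"
    and abelian_lb: "abelian_lie lb"
    and two_step_nb: "two_step_nilpotent nb"
    and PA: "PA_structure scale lb nb p"
begin

lemma bilinear_p: "bilinear_map scale p"
  using PA by (simp add: PA_structure_def)

lemma bilinear_nb: "bilinear_map scale nb"
  using lie_nb by (simp add: lie_algebra_def)

sublocale vector_space scale
  by (rule bilinear_map_vector_space[OF bilinear_p])

lemmas p_simps = bilinear_map_add_left[OF bilinear_p] bilinear_map_add_right[OF bilinear_p]
  bilinear_map_scale_left[OF bilinear_p] bilinear_map_scale_right[OF bilinear_p]
  bilinear_map_zero_left[OF bilinear_p]

lemmas nb_simps = bilinear_map_add_left[OF bilinear_nb] bilinear_map_add_right[OF bilinear_nb]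
  bilinear_map_scale_left[OF bilinear_nb] bilinear_map_scale_right[OF bilinear_nb]
  bilinear_map_diff_left[OF bilinear_nb] bilinear_map_minus_left[OF bilinear_nb]

lemma nb_nb_left: "nb (nb x y) z = 0"
  using two_step_nb by (simp add: two_step_nilpotent_def)

lemma nb_nb_right: "nb x (nb y z) = 0"
  by (rule two_step_nilpotent_right[OF lie_nb two_step_nb])

lemma p_swap: "p y x = p x y + nb x y"
  using PA abelian_lb by (simp add: PA_structure_def abelian_lie_def algebra_simps)

lemma p_left_commute: "p x (p y z) = p y (p x z)"
proof -
  have "p (lb x y) z = p x (p y z) - p y (p x z)"
    using PA by (simp add: PA_structure_def)
  then show ?thesis
    using abelian_lb by (simp add: abelian_lie_def p_simps)
qed

lemma p_derivation: "p x (nb y z) = nb (p x y) z + nb y (p x z)"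
  using PA by (simp add: PA_structure_def)

definition sym_product :: "'v \<Rightarrow> 'v \<Rightarrow> 'v" where
  "sym_product x y = scale (1/2) (p x y + p y x)"

lemma sym_product_eq: "sym_product x y = p x y + scale (1/2) (nb x y)"
proof -
  have "sym_product x y = scale (1/2) (p x y + p x y) + scale (1/2) (nb x y)"
    by (simp add: sym_product_def p_swap[of y x] add.assoc scale_right_distrib)
  also have "scale (1/2) (p x y + p x y) = p x y"
    by (simp add: scale_right_distrib flip: scale_left_distrib)
  finally show ?thesis .
qed

lemma sym_product_commute: "sym_product x y = sym_product y x"
  by (simp add: sym_product_def add.commute)

lemma bilinear_sym_product: "bilinear_map scale sym_product"
  using bilinear_map_symmetrize[OF bilinear_p] by (simp add: sym_product_def[abs_def])

lemma sym_product_derivation: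
  "sym_product x (nb y z) = nb (sym_product x y) z + nb y (sym_product x z)"
  by (simp add: sym_product_eq p_derivation nb_simps nb_nb_left nb_nb_right)

lemma sym_product_bracket_left: "sym_product (nb x y) z = p (nb x y) z"
  by (simp add: sym_product_eq nb_nb_left)

text \<open>Swapping x and y changes both sides by {x\<cdot>y - y\<cdot>x, z} = -{{x,y},z} = 0.\<close>

lemma mixed_term_swap:
  "p x (nb y z) + nb x (p y z) = p y (nb x z) + nb y (p x z)"
proof -
  have "p x (nb y z) - p y (nb x z) + nb x (p y z) - nb y (p x z) = nb (p x y - p y x) z"
    by (simp add: p_derivation nb_simps algebra_simps)
  also have "\<dots> = 0"
    by (simp add: p_swap[of y x] nb_simps nb_nb_left)
  finally show ?thesis by (simp add: algebra_simps)
qed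

lemma sym_product_left_commute:
  "sym_product x (sym_product y z) = sym_product y (sym_product x z)"
proof -
  have expand: "sym_product x (sym_product y z)
      = p x (p y z) + scale (1/2) (p x (nb y z) + nb x (p y z))" for x y z
    by (simp add: sym_product_eq p_simps nb_simps nb_nb_right scale_right_distrib add.assoc)
  show ?thesis
    by (simp add: expand mixed_term_swap p_left_commute[of x y])
qed

theorem CPA_sym_product_iff:
  "CPA_structure scale nb sym_product \<longleftrightarrow> (\<forall>u v w. p (nb u v) w = 0)"
  unfolding CPA_structure_def sym_product_bracket_left sym_product_left_commute diff_self
  using bilinear_sym_product sym_product_commute sym_product_derivation by blast

end

theorem corollary4p8:
  fixes scale :: "'k::field_char_0 \<Rightarrow> 'v::ab_group_add \<Rightarrow> 'v"
    and lb nb p :: "'v \<Rightarrow> 'v \<Rightarrow> 'v"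
  assumes "fin_dim_vs scale"
    and "lie_algebra scale lb" and "lie_algebra scale nb"
    and "abelian_lie lb" and "two_step_nilpotent nb"
    and "PA_structure scale lb nb p"
  shows "CPA_structure scale nb (\<lambda>x y. scale (1/2) (p x y + p y x))
         \<longleftrightarrow> (\<forall>u v w. p (nb u v) w = 0)"
proof -
  interpret abelian_PA_two_step scale lb nb p
    using assms by unfold_locales
  show ?thesis
    using CPA_sym_product_iff by (simp add: sym_product_def[abs_def])
qed

end
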